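(* Let $M_1=(E,r_1)$ and $M_2=(E,r_2)$ be demi-matroids. Then $\mathcal{E}_{M_1}\subseteq\mathcal{E}_{M_2}\iff \mathcal{E}_{M_2^*}\subseteq\mathcal{E}_{M_1^*}\iff \mathcal{E}_{\overline{M_1}}\subseteq\mathcal{E}_{\overline{M_2}}.$
   Context: A demi-matroid is a pair $(E,r)$ with $E$ finite and $r:2^E\to\mathbb{N}$ satisfying $r(\emptyset)=0$ and $r(X)\le r(X\cup\{x\})\le r(X)+1$ for all $X\subseteq E$, $x\in E$. For a demi-matroid $M=(E,r)$: its (first) dual is $M^*=(E,r^* )$ with $r^*(X)=|X|+r(E\setminus X)-r(E)$; its supplement (second) dual is $\overline{M}=(E,\overline{r})$ with $\overline{r}(X)=r(E)-r(E\setminus X)$; both are demi-matroids. Also $\mathcal{E}_M=\{(X,x): X\subseteq E,\ x\in X,\ r(X\setminus\{x\})=r(X)\}$. *)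

theory Defs
  imports Main
begin

definition demi_matroid :: "'a set \<Rightarrow> ('a set \<Rightarrow> nat) \<Rightarrow> bool" where
  "demi_matroid E r \<longleftrightarrow> finite E \<and> r {} = 0 \<and>
     (\<forall>X x. X \<subseteq> E \<and> x \<in> E \<longrightarrow> r X \<le> r (insert x X) \<and> r (insert x X) \<le> r X + 1)"

text \<open>First dual: r*(X) = |X| + r(E - X) - r(E). (Nonnegative for demi-matroids.)\<close>
definition dual_rank :: "'a set \<Rightarrow> ('a set \<Rightarrow> nat) \<Rightarrow> ('a set \<Rightarrow> nat)" where
  "dual_rank E r = (\<lambda>X. card X + r (E - X) - r E)"

definition supp_rank :: "'a set \<Rightarrow> ('a set \<Rightarrow> nat) \<Rightarrow> ('a set \<Rightarrow> nat)" where
  "supp_rank E r = (\<lambda>X. r E - r (E - X))"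

definition Epairs :: "'a set \<Rightarrow> ('a set \<Rightarrow> nat) \<Rightarrow> ('a set \<times> 'a) set" where
  "Epairs E r = {(X, x). X \<subseteq> E \<and> x \<in> X \<and> r (X - {x}) = r X}"

end

theory Submission
  imports Defs
begin

text \<open>Complementation \<open>(X, x) \<mapsto> ((E - X) \<union> {x}, x)\<close> is an involution on the pointed
  subsets of \<open>E\<close>. A pair lies in \<open>\<E>\<close> of the supplement dual exactly when its complement lies in
  \<open>\<E>\<^sub>M\<close>, and in \<open>\<E>\<close> of the first dual exactly when its complement does not; the rank bounds of
  a demi-matroid make the truncated subtractions in the two duals harmless. An inclusion
  \<open>\<E>\<^sub>M\<^sub>1 \<subseteq> \<E>\<^sub>M\<^sub>2\<close> therefore transports along the involution to the duals, reversed for the first one.\<close>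

definition pointed_subsets :: "'a set \<Rightarrow> ('a set \<times> 'a) set" where
  "pointed_subsets E = {(X, x). X \<subseteq> E \<and> x \<in> X}"

definition complement_pair :: "'a set \<Rightarrow> 'a set \<times> 'a \<Rightarrow> 'a set \<times> 'a" where
  "complement_pair E p = (insert (snd p) (E - fst p), snd p)"

lemma complement_pair_in_pointed_subsets:
  "p \<in> pointed_subsets E \<Longrightarrow> complement_pair E p \<in> pointed_subsets E"
  by (auto simp: pointed_subsets_def complement_pair_def)

lemma complement_pair_involution:
  "p \<in> pointed_subsets E \<Longrightarrow> complement_pair E (complement_pair E p) = p"
  by (auto simp: pointed_subsets_def complement_pair_def)

lemma Epairs_subset_pointed_subsets: "Epairs E r \<subseteq> pointed_subsets E"
  by (auto simp: Epairs_def pointed_subsets_def)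

lemma Epairs_eq_Collect_complement_pair:
  assumes "\<And>X x. X \<subseteq> E \<Longrightarrow> x \<in> X \<Longrightarrow> (X, x) \<in> Epairs E r \<longleftrightarrow> Q (insert x (E - X), x)"
  shows "Epairs E r = {p \<in> pointed_subsets E. Q (complement_pair E p)}"
proof -
  have "p \<in> Epairs E r \<longleftrightarrow> p \<in> pointed_subsets E \<and> Q (complement_pair E p)" for p
    using assms Epairs_subset_pointed_subsets[of E r]
    by (cases p) (auto simp: pointed_subsets_def complement_pair_def)
  then show ?thesis by blast
qed

lemma subset_iff_preimage_subset_involution:
  assumes "\<And>p. p \<in> P \<Longrightarrow> f p \<in> P" and "\<And>p. p \<in> P \<Longrightarrow> f (f p) = p" and "A \<subseteq> P"
  shows "A \<subseteq> B \<longleftrightarrow> {p \<in> P. f p \<in> A} \<subseteq> {p \<in> P. f p \<in> B}"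
proof
  assume "{p \<in> P. f p \<in> A} \<subseteq> {p \<in> P. f p \<in> B}"
  then show "A \<subseteq> B" using assms by (metis (mono_tags, lifting) mem_Collect_eq subset_iff)
qed blast

lemma demi_matroid_rank_insert:
  assumes "demi_matroid E r" and "Y \<subseteq> E" and "x \<in> E"
  shows "r Y \<le> r (insert x Y) \<and> r (insert x Y) \<le> r Y + 1"
  using assms unfolding demi_matroid_def by blast

lemma demi_matroid_rank_union:
  assumes dm: "demi_matroid E r" and "A \<subseteq> E" and "Y \<subseteq> E"
  shows "r Y \<le> r (Y \<union> A) \<and> r (Y \<union> A) \<le> r Y + card A"
proof -
  have "finite A" using dm \<open>A \<subseteq> E\<close> finite_subset unfolding demi_matroid_def by blast
  from this \<open>A \<subseteq> E\<close> show ?thesis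
  proof (induction A rule: finite_induct)
    case empty then show ?case by simp
  next
    case (insert a F)
    then have "r (Y \<union> F) \<le> r (insert a (Y \<union> F)) \<and> r (insert a (Y \<union> F)) \<le> r (Y \<union> F) + 1"
      using demi_matroid_rank_insert[OF dm, of "Y \<union> F" a] \<open>Y \<subseteq> E\<close> by simp
    then show ?case using insert by simp
  qed
qed

lemma demi_matroid_rank_le_rank_ground:
  assumes "demi_matroid E r" and "Y \<subseteq> E"
  shows "r Y \<le> r E"
proof -
  have "Y \<union> E = E" using assms(2) by blast
  then show ?thesis using demi_matroid_rank_union[OF assms(1) subset_refl assms(2)] by simp
qed

lemma Epairs_supp_rank:
  assumes dm: "demi_matroid E r"
  shows "Epairs E (supp_rank E r) = {p \<in> pointed_subsets E. complement_pair E p \<in> Epairs E r}"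
proof -
  have "(X, x) \<in> Epairs E (supp_rank E r) \<longleftrightarrow> (insert x (E - X), x) \<in> Epairs E r"
    if "X \<subseteq> E" "x \<in> X" for X x
  proof -
    have "E - (X - {x}) = insert x (E - X)" "insert x (E - X) - {x} = E - X"
      using that by auto
    moreover have "r (E - X) \<le> r E" "r (insert x (E - X)) \<le> r E"
      using demi_matroid_rank_le_rank_ground[OF dm] that by auto
    ultimately show ?thesis
      using that unfolding Epairs_def supp_rank_def by auto
  qed
  then show ?thesis
    by (rule Epairs_eq_Collect_complement_pair)
qed

lemma Epairs_dual_rank:
  assumes dm: "demi_matroid E r"
  shows "Epairs E (dual_rank E r) = {p \<in> pointed_subsets E. complement_pair E p \<notin> Epairs E r}"
proof (rule Epairs_eq_Collect_complement_pair)
  fix X x assume X: "X \<subseteq> E" "x \<in> X"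
  let ?C = "insert x (E - X)"
  have "r E \<le> r (E - X) + card X"
  proof -
    have "(E - X) \<union> X = E" using X by auto
    then show ?thesis using demi_matroid_rank_union[OF dm X(1), of "E - X"] by simp
  qed
  moreover have "r E \<le> r ?C + card (X - {x})"
  proof -
    have "?C \<union> (X - {x}) = E" "X - {x} \<subseteq> E" "?C \<subseteq> E" using X by auto
    then show ?thesis using demi_matroid_rank_union[OF dm, of "X - {x}" ?C] by simp
  qed
  moreover have "card X = card (X - {x}) + 1"
  proof -
    have "finite X" using X(1) dm finite_subset unfolding demi_matroid_def by blast
    then show ?thesis using card_Suc_Diff1 X(2) by fastforce
  qed
  moreover have "r (E - X) \<le> r ?C" "r ?C \<le> r (E - X) + 1"
    using demi_matroid_rank_insert[OF dm, of "E - X" x] X by blast+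
  ultimately have "card (X - {x}) + r ?C - r E = card X + r (E - X) - r E \<longleftrightarrow> r (E - X) \<noteq> r ?C"
    by linarith
  moreover have "E - (X - {x}) = ?C" "?C - {x} = E - X" "?C \<subseteq> E" using X by auto
  ultimately show "(X, x) \<in> Epairs E (dual_rank E r) \<longleftrightarrow> (?C, x) \<notin> Epairs E r"
    using X unfolding Epairs_def dual_rank_def by simp
qed

theorem mainTheorem6:
  fixes E :: "'a set" and r1 r2 :: "'a set \<Rightarrow> nat"
  assumes "demi_matroid E r1" and "demi_matroid E r2"
  shows "(Epairs E r1 \<subseteq> Epairs E r2 \<longleftrightarrow> Epairs E (dual_rank E r2) \<subseteq> Epairs E (dual_rank E r1))
       \<and> (Epairs E (dual_rank E r2) \<subseteq> Epairs E (dual_rank E r1) \<longleftrightarrow> Epairs E (supp_rank E r1) \<subseteq> Epairs E (supp_rank E r2))"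
proof -
  let ?P = "pointed_subsets E" and ?c = "complement_pair E"
  have transport: "Epairs E r1 \<subseteq> Epairs E r2 \<longleftrightarrow>
      {p \<in> ?P. ?c p \<in> Epairs E r1} \<subseteq> {p \<in> ?P. ?c p \<in> Epairs E r2}"
    by (rule subset_iff_preimage_subset_involution[OF complement_pair_in_pointed_subsets
          complement_pair_involution Epairs_subset_pointed_subsets])
  have "{p \<in> ?P. ?c p \<notin> Epairs E r2} \<subseteq> {p \<in> ?P. ?c p \<notin> Epairs E r1} \<longleftrightarrow>
      {p \<in> ?P. ?c p \<in> Epairs E r1} \<subseteq> {p \<in> ?P. ?c p \<in> Epairs E r2}"
    by blast
  then show ?thesis
    using transport by (simp add: Epairs_dual_rank Epairs_supp_rank assms)
qed

end
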